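(* Let $\mathcal{F}=\{\sum_{i=1}^m a_i\,\mathrm{ReLU}(w_i^\top x+b_i): m\in\mathbb{N},\ w_i\in\mathbb{R}^d,\ a_i,b_i\in\mathbb{R}\}$ be the class of two-layer ReLU networks on $\mathbb{R}^d$, and let $P,Q$ be distributions supported on the unit sphere $S^{d-1}=\{x:\|x\|_2=1\}$. Suppose there exists $\epsilon>0$ with $$Q\big(\{x\in S^{d-1}:\mathrm{dist}(x,\mathrm{supp}(P))\ge\epsilon\}\big)>0.$$ Then for every $M>0$ there exists $f\in\mathcal{F}$ with $\mathbb{E}_P[f(x)^2]=0$ and $\mathbb{E}_Q[f(x)^2]\ge M$.
   Context: $\mathrm{ReLU}(z)=\max(z,0)$; $\mathrm{supp}(P)$ is the support of $P$ and $\mathrm{dist}(x,S)=\inf_{s\in S}\|x-s\|_2$. *)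

theory Defs
  imports "HOL-Probability.Probability"
begin

definition relu :: "real \<Rightarrow> real" where
  "relu z = max z 0"

definition relu_net :: "(real \<times> 'a::euclidean_space \<times> real) list \<Rightarrow> 'a \<Rightarrow> real" where
  "relu_net ps x = (\<Sum>(a, w, b) \<leftarrow> ps. a * relu (w \<bullet> x + b))"

definition two_layer_relu_class :: "('a::euclidean_space \<Rightarrow> real) set" where
  "two_layer_relu_class = {f. \<exists>ps. f = relu_net ps}"

definition msupp :: "'a::metric_space measure \<Rightarrow> 'a set" where
  "msupp P = {x. \<forall>e>0. emeasure P (ball x e) > 0}"

end

theory Submission
  imports Defs
begin

text \<open>Cover the compact part of the sphere lying at distance at least \<open>\<epsilon>\<close> from
  the support of \<open>P\<close> by finitely many balls of radius \<open>\<epsilon>/4\<close>; one of them, centred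
  at some \<open>c\<close>, has positive \<open>Q\<close>-mass, while the ball of radius \<open>\<epsilon>/2\<close> around \<open>c\<close> is
  \<open>P\<close>-null. On the sphere \<open>c \<bullet> x = 1 - dist c x\<^sup>2 / 2\<close>, so a single ReLU neuron
  \<open>x \<mapsto> relu (c \<bullet> x + b)\<close> with a suitable bias is a cap supported in the
  \<open>\<epsilon>/2\<close>-ball and bounded below on the \<open>\<epsilon>/4\<close>-ball. Scaling its output weight makes
  its \<open>Q\<close>-energy arbitrarily large while its \<open>P\<close>-energy stays zero.\<close>

lemma compact_ex_ball_measure_pos:
  fixes Q :: "'a::metric_space measure"
  assumes "finite_measure Q" "sets Q = sets borel"
    and "compact T" "T \<subseteq> S" "S \<in> sets borel" "measure Q T > 0" "r > 0"
  shows "\<exists>c\<in>T. measure Q (ball c r \<inter> S) > 0"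
proof (rule ccontr)
  assume "\<not> ?thesis"
  hence null: "measure Q (ball c r \<inter> S) \<le> 0" if "c \<in> T" for c
    using that by (simp add: not_less)
  have "T \<subseteq> (\<Union>c\<in>T. ball c r)" using \<open>r > 0\<close> by auto
  then obtain C where C: "C \<subseteq> T" "finite C" "T \<subseteq> (\<Union>c\<in>C. ball c r)"
    using compactE_image[OF \<open>compact T\<close>, of T "\<lambda>c. ball c r"] by auto
  have sets: "ball c r \<inter> S \<in> sets Q" for c using assms(2,5) by auto
  have "(\<Union>c\<in>C. ball c r \<inter> S) \<in> sets Q"
    using C(2) sets by (intro sets.finite_UN) auto
  hence "measure Q T \<le> measure Q (\<Union>c\<in>C. ball c r \<inter> S)"
    using C(3) assms(4) by (intro finite_measure.finite_measure_mono[OF assms(1)]) auto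
  also have "\<dots> \<le> (\<Sum>c\<in>C. measure Q (ball c r \<inter> S))"
    using C(2) sets by (intro measure_UNION_le) auto
  also have "\<dots> \<le> 0" using C(1) null by (intro sum_nonpos) auto
  finally show False using assms(6) by simp
qed

lemma compact_disjoint_msupp_null:
  fixes P :: "'a::metric_space measure"
  assumes "sets P = sets borel" "compact K" "K \<inter> msupp P = {}"
  shows "K \<in> null_sets P"
proof -
  obtain e where e: "\<And>y. y \<in> K \<Longrightarrow> e y > 0 \<and> emeasure P (ball y (e y)) = 0"
    using assms(3) unfolding msupp_def by (simp add: not_less disjoint_iff) metis
  have "K \<subseteq> (\<Union>y\<in>K. ball y (e y))" using e by force
  then obtain Y where Y: "Y \<subseteq> K" "finite Y" "K \<subseteq> (\<Union>y\<in>Y. ball y (e y))"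
    using compactE_image[OF \<open>compact K\<close>, of K "\<lambda>y. ball y (e y)"] by auto
  have "emeasure P K \<le> emeasure P (\<Union>y\<in>Y. ball y (e y))"
    using Y assms(1) by (intro emeasure_mono) auto
  also have "\<dots> \<le> (\<Sum>y\<in>Y. emeasure P (ball y (e y)))"
    using Y assms(1) by (intro emeasure_subadditive_finite) auto
  also have "\<dots> = 0" using Y e by (intro sum.neutral) auto
  finally show ?thesis
    using assms(1) borel_closed[OF compact_imp_closed[OF assms(2)]] by (auto intro: null_setsI)
qed

lemma inner_unit_eq_dist:
  fixes c x :: "'a::real_inner"
  assumes "norm c = 1" "norm x = 1"
  shows "c \<bullet> x = 1 - (dist c x)\<^sup>2 / 2"
proof -
  have "(dist c x)\<^sup>2 = c \<bullet> c + x \<bullet> x - 2 * (c \<bullet> x)"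
    by (simp add: dist_norm power2_norm_eq_inner inner_diff_left inner_diff_right inner_commute)
  moreover have "c \<bullet> c = 1" "x \<bullet> x = 1"
    using assms by (simp_all add: dot_square_norm)
  ultimately show ?thesis by (simp add: field_simps)
qed

lemma relu_cap_eq_0:
  fixes c x :: "'a::real_inner"
  assumes "norm c = 1" "norm x = 1" "0 \<le> r" "r \<le> dist c x"
  shows "relu (c \<bullet> x + (r\<^sup>2 / 2 - 1)) = 0"
proof -
  have "r\<^sup>2 \<le> (dist c x)\<^sup>2" using assms(4,3) by (rule power_mono)
  thus ?thesis using inner_unit_eq_dist[OF assms(1,2)] by (simp add: relu_def)
qed

lemma relu_cap_ge:
  fixes c x :: "'a::real_inner"
  assumes "norm c = 1" "norm x = 1" "dist c x < r / 2"
  shows "3 * r\<^sup>2 / 8 \<le> relu (c \<bullet> x + (r\<^sup>2 / 2 - 1))"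
proof -
  have "(dist c x)\<^sup>2 < (r / 2)\<^sup>2" using assms(3) by (intro power_strict_mono) auto
  hence "3 * r\<^sup>2 / 8 \<le> c \<bullet> x + (r\<^sup>2 / 2 - 1)"
    using inner_unit_eq_dist[OF assms(1,2)] by (simp add: power_divide)
  thus ?thesis unfolding relu_def by (rule max.coboundedI1)
qed

lemma relu_unit_inner_le:
  fixes c x :: "'a::real_inner"
  assumes "norm c = 1" "norm x = 1"
  shows "\<bar>relu (c \<bullet> x + b)\<bar> \<le> 1 + \<bar>b\<bar>"
  using Cauchy_Schwarz_ineq2[of c x] assms by (simp add: relu_def)

lemma integral_relu_cap_sq_eq_0:
  fixes P :: "'a::real_inner measure"
  assumes "AE x in P. norm x = 1" "norm c = 1" "0 \<le> r" "cball c r \<in> null_sets P"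
  shows "(\<integral>x. (K * relu (c \<bullet> x + (r\<^sup>2 / 2 - 1)))\<^sup>2 \<partial>P) = 0"
proof (rule integral_eq_zero_AE)
  show "AE x in P. (K * relu (c \<bullet> x + (r\<^sup>2 / 2 - 1)))\<^sup>2 = 0"
    using AE_not_in[OF assms(4)] assms(1)
    by eventually_elim (simp add: relu_cap_eq_0[OF assms(2) _ assms(3)])
qed

lemma integral_relu_cap_sq_ge:
  fixes Q :: "'a::euclidean_space measure"
  assumes "finite_measure Q" "sets Q = sets borel" "AE x in Q. norm x = 1" "norm c = 1"
  shows "K\<^sup>2 * (3 * r\<^sup>2 / 8)\<^sup>2 * measure Q (ball c (r / 2) \<inter> sphere 0 1)
    \<le> (\<integral>x. (K * relu (c \<bullet> x + (r\<^sup>2 / 2 - 1)))\<^sup>2 \<partial>Q)"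
    (is "_ \<le> (\<integral>x. (?f x)\<^sup>2 \<partial>Q)")
proof -
  interpret Q: finite_measure Q by fact
  define A where "A = ball c (r / 2) \<inter> sphere (0::'a) 1"
  have A: "A \<in> sets Q" unfolding A_def using assms(2) by auto
  have lower: "K\<^sup>2 * (3 * r\<^sup>2 / 8)\<^sup>2 * indicator A x \<le> (?f x)\<^sup>2" for x
  proof (cases "x \<in> A")
    case True
    hence "3 * r\<^sup>2 / 8 \<le> relu (c \<bullet> x + (r\<^sup>2 / 2 - 1))"
      using relu_cap_ge[OF assms(4)] unfolding A_def by simp
    hence "(3 * r\<^sup>2 / 8)\<^sup>2 \<le> (relu (c \<bullet> x + (r\<^sup>2 / 2 - 1)))\<^sup>2"
      by (intro power_mono) auto
    thus ?thesis using True by (simp add: power_mult_distrib mult_left_mono)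
  qed simp
  have "AE x in Q. norm ((?f x)\<^sup>2) \<le> (K * (1 + \<bar>r\<^sup>2 / 2 - 1\<bar>))\<^sup>2"
    using assms(3)
  proof eventually_elim
    case (elim x)
    have "\<bar>?f x\<bar> \<le> \<bar>K\<bar> * (1 + \<bar>r\<^sup>2 / 2 - 1\<bar>)"
      unfolding abs_mult by (intro mult_left_mono relu_unit_inner_le assms(4) elim) auto
    hence "\<bar>?f x\<bar>\<^sup>2 \<le> (\<bar>K\<bar> * (1 + \<bar>r\<^sup>2 / 2 - 1\<bar>))\<^sup>2" by (intro power_mono) auto
    thus ?case by (simp add: power_mult_distrib)
  qed
  moreover have "(\<lambda>x. (?f x)\<^sup>2) \<in> borel_measurable Q"
    unfolding measurable_cong_sets[OF assms(2) refl] relu_def by measurable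
  ultimately have "integrable Q (\<lambda>x. (?f x)\<^sup>2)"
    by (rule Q.integrable_const_bound)
  have "K\<^sup>2 * (3 * r\<^sup>2 / 8)\<^sup>2 * measure Q A = (\<integral>x. K\<^sup>2 * (3 * r\<^sup>2 / 8)\<^sup>2 * indicator A x \<partial>Q)"
    using A by simp
  also have "\<dots> \<le> (\<integral>x. (?f x)\<^sup>2 \<partial>Q)"
    using lower A \<open>integrable Q _\<close>
    by (intro integral_mono integrable_mult_right integrable_real_indicator)
      (auto simp: Q.emeasure_finite less_top[symmetric])
  finally show ?thesis unfolding A_def .
qed

lemma ex_cap_centre_far_from_msupp:
  fixes P Q :: "'a::euclidean_space measure"
  assumes "finite_measure Q" "sets P = sets borel" "sets Q = sets borel" "\<epsilon> > 0"
    and "measure Q {x. norm x = 1 \<and> infdist x (msupp P) \<ge> \<epsilon>} > 0"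
  obtains c where "norm c = 1" "measure Q (ball c (\<epsilon> / 4) \<inter> sphere 0 1) > 0"
    and "cball c (\<epsilon> / 2) \<in> null_sets P"
proof -
  define T where "T = sphere (0::'a) 1 \<inter> {x. infdist x (msupp P) \<ge> \<epsilon>}"
  have "compact T" unfolding T_def
    by (intro compact_Int_closed closed_Collect_le continuous_intros) auto
  moreover have "T = {x. norm x = 1 \<and> infdist x (msupp P) \<ge> \<epsilon>}" unfolding T_def by auto
  hence "measure Q T > 0" using assms(5) by simp
  ultimately have "\<exists>c\<in>T. measure Q (ball c (\<epsilon> / 4) \<inter> sphere 0 1) > 0"
    by (intro compact_ex_ball_measure_pos[OF assms(1,3)]) (use assms(4) in \<open>auto simp: T_def\<close>)
  then obtain c where "c \<in> T" and q: "measure Q (ball c (\<epsilon> / 4) \<inter> sphere 0 1) > 0"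
    by blast
  hence c: "norm c = 1" "infdist c (msupp P) \<ge> \<epsilon>" unfolding T_def by auto
  have "\<epsilon> / 2 < dist c y" if "y \<in> msupp P" for y
    using infdist_le[OF that, of c] c(2) \<open>\<epsilon> > 0\<close> by linarith
  hence "cball c (\<epsilon> / 2) \<inter> msupp P = {}" by fastforce
  hence "cball c (\<epsilon> / 2) \<in> null_sets P"
    by (intro compact_disjoint_msupp_null assms(2) compact_cball)
  with c(1) q show ?thesis by (rule that)
qed

theorem mainTheorem7:
  fixes P Q :: "'a::euclidean_space measure"
  assumes "prob_space P" and "prob_space Q"
    and "sets P = sets borel" and "sets Q = sets borel"
    and "AE x in P. norm x = 1" and "AE x in Q. norm x = 1"
    and "\<epsilon> > 0"
    and "measure Q {x. norm x = 1 \<and> infdist x (msupp P) \<ge> \<epsilon>} > 0"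
  shows "\<forall>M>0. \<exists>f \<in> two_layer_relu_class.
           (\<integral>x. (f x)\<^sup>2 \<partial>P) = 0 \<and> (\<integral>x. (f x)\<^sup>2 \<partial>Q) \<ge> M"
proof (intro allI impI)
  fix M :: real assume "M > 0"
  interpret Q: prob_space Q by fact
  obtain c where c: "norm c = 1" and q_pos: "measure Q (ball c (\<epsilon> / 4) \<inter> sphere 0 1) > 0"
      (is "?q > 0") and null: "cball c (\<epsilon> / 2) \<in> null_sets P"
    using ex_cap_centre_far_from_msupp[OF Q.finite_measure_axioms assms(3,4,7,8)] by blast
  define \<alpha> where "\<alpha> = (3 * (\<epsilon> / 2)\<^sup>2 / 8)\<^sup>2"
  define K where "K = sqrt (M / (\<alpha> * ?q))"
  define f where "f = relu_net [(K, c, (\<epsilon> / 2)\<^sup>2 / 2 - 1)]"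
  have f: "f x = K * relu (c \<bullet> x + ((\<epsilon> / 2)\<^sup>2 / 2 - 1))" for x
    by (simp add: f_def relu_net_def)
  have "(\<integral>x. (f x)\<^sup>2 \<partial>P) = 0"
    unfolding f using integral_relu_cap_sq_eq_0[OF assms(5) c _ null] \<open>\<epsilon> > 0\<close> by simp
  moreover have "M = K\<^sup>2 * \<alpha> * ?q"
    using q_pos \<open>M > 0\<close> \<open>\<epsilon> > 0\<close> unfolding K_def \<alpha>_def by simp
  hence "M \<le> (\<integral>x. (f x)\<^sup>2 \<partial>Q)"
    unfolding f \<alpha>_def
    using integral_relu_cap_sq_ge[OF Q.finite_measure_axioms assms(4,6) c, of K "\<epsilon> / 2"] by simp
  moreover have "f \<in> two_layer_relu_class" unfolding two_layer_relu_class_def f_def by blast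
  ultimately show "\<exists>f \<in> two_layer_relu_class. (\<integral>x. (f x)\<^sup>2 \<partial>P) = 0 \<and> (\<integral>x. (f x)\<^sup>2 \<partial>Q) \<ge> M"
    by blast
qed

end
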